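(* Consider the single-authority continuum model described in the context, where each $u_m$ is concave but possibly non-differentiable at finitely many points, and let $u_m^-$ denote the left derivative of $u_m$. Let $\mu^*$ denote the allocation implemented (in a given state $\omega$) by the generalized APM $A^*_m(y_m,s)\equiv h^{-1}\big(h(s)+u_m^-(y_m)\big)$. Then $\mu^*$ is an optimal allocation in state $\omega$.
   Context: An authority allocates a resource of measure $q\in(0,1)$ to agents with types $(s,m)\in[0,1]\times\mathcal M$ ($\mathcal M$ finite). A state $\omega$ is a type distribution with density $f_\omega$. Allocations are measurable $\mu:\Theta\to\{0,1\}$ allocating measure at most $q$. $h:[0,1]\to\mathbb R_+$ continuous strictly increasing, $\bar s_h(\mu,\omega)=\int\mu h\,dF_\omega$, $x_m(\mu,\omega)=\int_0^1\mu(s,m)f_\omega(s,m)ds$. Utility $\xi=g(\bar s_h+\sum_mu_m(x_m))$ with $g$ continuous strictly increasing; $h(0)+u_m^-(q)\ge0$ is not needed here but the authority always prefers to allocate the full resource. An allocation is optimal in $\omega$ if it maximizes $\xi$ over feasible allocations. An APM $A=\{A_m\}$ implements $\mu$ in state $\omega$ if (1) $\mu(\theta)=1$ iff for all $\theta'$ with $\mu(\theta')=0$, $A_{m(\theta)}(x_{m(\theta)}(\mu,\omega),s(\theta))>A_{m(\theta')}(x_{m(\theta')}(\mu,\omega),s(\theta'))$, and (2) $\sum_mx_m(\mu,\omega)=q$. (Since $A^*$ is monotone, it implements an essentially unique allocation.) *)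

theory Defs
  imports "HOL-Analysis.Analysis"
begin

text \<open>Types theta = (s,m) with s in [0,1] and m in a finite type 'm.
  A state omega is represented by its density f :: real => 'm => real.\<close>

definition left_deriv :: "(real \<Rightarrow> real) \<Rightarrow> real \<Rightarrow> real" where
  "left_deriv u y = Lim (at_left y) (\<lambda>t. (u y - u t) / (y - t))"

definition is_density :: "(real \<Rightarrow> 'm::finite \<Rightarrow> real) \<Rightarrow> bool" where
  "is_density f \<longleftrightarrow>
     (\<forall>m. \<forall>s\<in>{0..1}. 0 \<le> f s m) \<and>
     (\<forall>m. set_integrable lborel {0..1} (\<lambda>s. f s m)) \<and>
     (\<Sum>m\<in>UNIV. (LINT s:{0..1}|lborel. f s m)) = 1"

definition xm :: "(real \<Rightarrow> 'm::finite \<Rightarrow> real) \<Rightarrow> (real \<Rightarrow> 'm \<Rightarrow> real) \<Rightarrow> 'm \<Rightarrow> real" where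
  "xm f \<mu> m = (LINT s:{0..1}|lborel. \<mu> s m * f s m)"

definition sbar :: "(real \<Rightarrow> real) \<Rightarrow> (real \<Rightarrow> 'm::finite \<Rightarrow> real) \<Rightarrow> (real \<Rightarrow> 'm \<Rightarrow> real) \<Rightarrow> real" where
  "sbar h f \<mu> = (\<Sum>m\<in>UNIV. (LINT s:{0..1}|lborel. \<mu> s m * h s * f s m))"

definition xi :: "(real \<Rightarrow> real) \<Rightarrow> (real \<Rightarrow> real) \<Rightarrow> ('m::finite \<Rightarrow> real \<Rightarrow> real)
    \<Rightarrow> (real \<Rightarrow> 'm \<Rightarrow> real) \<Rightarrow> (real \<Rightarrow> 'm \<Rightarrow> real) \<Rightarrow> real" where
  "xi g h u f \<mu> = g (sbar h f \<mu> + (\<Sum>m\<in>UNIV. u m (xm f \<mu> m)))"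

definition is_allocation :: "(real \<Rightarrow> 'm::finite \<Rightarrow> real) \<Rightarrow> bool" where
  "is_allocation \<mu> \<longleftrightarrow>
     (\<forall>m. \<forall>s\<in>{0..1}. \<mu> s m \<in> {0, 1}) \<and>
     (\<forall>m. set_borel_measurable lborel {0..1} (\<lambda>s. \<mu> s m))"

definition feasible :: "real \<Rightarrow> (real \<Rightarrow> 'm::finite \<Rightarrow> real) \<Rightarrow> (real \<Rightarrow> 'm \<Rightarrow> real) \<Rightarrow> bool" where
  "feasible q f \<mu> \<longleftrightarrow> is_allocation \<mu> \<and> (\<Sum>m\<in>UNIV. xm f \<mu> m) \<le> q"

definition optimal :: "real \<Rightarrow> (real \<Rightarrow> real) \<Rightarrow> (real \<Rightarrow> real) \<Rightarrow> ('m::finite \<Rightarrow> real \<Rightarrow> real)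
    \<Rightarrow> (real \<Rightarrow> 'm \<Rightarrow> real) \<Rightarrow> (real \<Rightarrow> 'm \<Rightarrow> real) \<Rightarrow> bool" where
  "optimal q g h u f \<mu> \<longleftrightarrow>
     feasible q f \<mu> \<and> (\<forall>\<nu>. feasible q f \<nu> \<longrightarrow> xi g h u f \<nu> \<le> xi g h u f \<mu>)"

definition implements :: "('m::finite \<Rightarrow> real \<Rightarrow> real \<Rightarrow> real) \<Rightarrow> real
    \<Rightarrow> (real \<Rightarrow> 'm \<Rightarrow> real) \<Rightarrow> (real \<Rightarrow> 'm \<Rightarrow> real) \<Rightarrow> bool" where
  "implements A q f \<mu> \<longleftrightarrow>
     (\<forall>m. \<forall>s\<in>{0..1}. (\<mu> s m = 1 \<longleftrightarrow>
        (\<forall>m'. \<forall>s'\<in>{0..1}. \<mu> s' m' = 0 \<longrightarrow>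
            A m (xm f \<mu> m) s > A m' (xm f \<mu> m') s'))) \<and>
     (\<Sum>m\<in>UNIV. xm f \<mu> m) = q"

text \<open>The generalized APM A*_m(y,s) = h^{-1}(h(s) + u_m^-(y)); hinv is a (strictly
  increasing) inverse of h, see the theorem's hypotheses.\<close>
definition Astar :: "(real \<Rightarrow> real) \<Rightarrow> (real \<Rightarrow> real) \<Rightarrow> ('m \<Rightarrow> real \<Rightarrow> real) \<Rightarrow> 'm \<Rightarrow> real \<Rightarrow> real \<Rightarrow> real" where
  "Astar h hinv u m y s = hinv (h s + left_deriv (u m) y)"

end

theory Submission imports Defs begin

text \<open>Let \<open>x\<^sub>m\<close> be the mass that \<open>\<mu>\<^sup>*\<close> gives to group \<open>m\<close> and \<open>d\<^sub>m = u\<^sub>m\<^sup>-(x\<^sub>m)\<close>.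
  Since \<open>h\<^sup>-\<^sup>1\<close> is increasing, \<open>\<mu>\<^sup>*\<close> allocates exactly to the types whose index \<open>h(s) + d\<^sub>m\<close>
  lies above some threshold \<open>c\<close>. Pointwise comparison with \<open>c\<close> then shows that \<open>\<mu>\<^sup>*\<close> maximises
  the linearised objective \<open>\<integral>\<mu>h dF + \<Sigma>\<^sub>m d\<^sub>m x\<^sub>m(\<mu>)\<close> among allocations of total mass \<open>q\<close>.
  A concave \<open>u\<^sub>m\<close> lies below its tangent line of slope \<open>d\<^sub>m\<close> at \<open>x\<^sub>m\<close>, so the linearisation
  dominates the true objective of every full allocation and agrees with it at \<open>\<mu>\<^sup>*\<close>; by
  hypothesis it suffices to compare with full allocations.\<close>

lemma slope_swap: "((a::'a::field) - b) / (c - d) = (b - a) / (d - c)"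
  by (metis minus_diff_eq minus_divide_divide)

lemma concave_on_slope_le:
  fixes f :: "real \<Rightarrow> real"
  assumes "concave_on I f" and "x \<in> I" "y \<in> I" and "x < t" "t < y"
  shows "(f x - f y) / (x - y) \<le> (f x - f t) / (x - t)"
    and "(f t - f y) / (t - y) \<le> (f x - f y) / (x - y)"
proof -
  have slope_neg: "- f p - - f r = - (f p - f r)" for p r by simp
  from assms(1) have "convex_on I (\<lambda>x. - f x)" by (simp add: concave_on_def)
  from convex_on_slope_le[OF this assms(2-)] show
    "(f x - f y) / (x - y) \<le> (f x - f t) / (x - t)"
    "(f t - f y) / (t - y) \<le> (f x - f y) / (x - y)"
    by (simp_all only: slope_neg divide_minus_left neg_le_iff_le)
qed

lemma concave_on_left_slope_antimono:
  fixes u :: "real \<Rightarrow> real"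
  assumes "concave_on {a<..<b} u" and "a < t" "t < t'" "t' < x" "x < b"
  shows "(u x - u t') / (x - t') \<le> (u x - u t) / (x - t)"
  using concave_on_slope_le(2)[OF assms(1), of t x t'] assms
  by (simp add: slope_swap)

lemma concave_on_right_slope_le_left_slope:
  fixes u :: "real \<Rightarrow> real"
  assumes "concave_on {a<..<b} u" and "a < t" "t < x" "x < y" "y < b"
  shows "(u y - u x) / (y - x) \<le> (u x - u t) / (x - t)"
proof -
  have "(u x - u y) / (x - y) \<le> (u t - u y) / (t - y)"
    using concave_on_slope_le(2)[OF assms(1), of t y x] assms by simp
  also have "\<dots> \<le> (u t - u x) / (t - x)"
    using concave_on_slope_le(1)[OF assms(1), of t y x] assms by simp
  finally show ?thesis by (simp add: slope_swap)
qed

lemma bdd_below_concave_on_left_slopes: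
  fixes u :: "real \<Rightarrow> real"
  assumes "concave_on {a<..<b} u" and "x < b"
  shows "bdd_below ((\<lambda>t. (u x - u t) / (x - t)) ` {a<..<x})"
proof (rule bdd_belowI2)
  fix t assume "t \<in> {a<..<x}"
  then show "(u ((x + b) / 2) - u x) / ((x + b) / 2 - x) \<le> (u x - u t) / (x - t)"
    by (intro concave_on_right_slope_le_left_slope[OF assms(1)]) (use assms(2) in auto)
qed

lemma left_deriv_concave_on:
  fixes u :: "real \<Rightarrow> real"
  assumes u: "concave_on {a<..<b} u" and "a < x" "x < b"
  shows "left_deriv u x = (INF t\<in>{a<..<x}. (u x - u t) / (x - t))"
proof -
  define Q where "Q t = (u x - u t) / (x - t)" for t
  have bdd: "bdd_below (Q ` {a<..<x})"
    unfolding Q_def using bdd_below_concave_on_left_slopes[OF u \<open>x < b\<close>] .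
  have "(Q \<longlongrightarrow> Inf (Q ` {a<..<x})) (at_left x)"
  proof (rule decreasing_tendsto)
    show "\<forall>\<^sub>F t in at_left x. Inf (Q ` {a<..<x}) \<le> Q t"
      using eventually_at_left_real[OF \<open>a < x\<close>]
      by eventually_elim (use bdd in \<open>auto intro: cInf_lower\<close>)
  next
    fix l assume "Inf (Q ` {a<..<x}) < l"
    then obtain t where t: "a < t" "t < x" "Q t < l"
      using \<open>a < x\<close> by (auto simp: cInf_less_iff[OF _ bdd])
    show "\<forall>\<^sub>F t' in at_left x. Q t' < l"
      using eventually_at_left_real[OF \<open>t < x\<close>] by eventually_elim
        (use t concave_on_left_slope_antimono[OF u] \<open>x < b\<close> in \<open>force simp: Q_def\<close>)
  qed
  then show ?thesis
    unfolding left_deriv_def Q_def by (intro tendsto_Lim) (auto simp: trivial_limit_at_left_real)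
qed

lemma concave_on_le_left_deriv_tangent:
  fixes u :: "real \<Rightarrow> real"
  assumes u: "concave_on {a<..<b} u" and x: "a < x" "x < b" and y: "a < y" "y < b"
  shows "u y \<le> u x + left_deriv u x * (y - x)"
proof (cases y x rule: linorder_cases)
  case less
  have "left_deriv u x \<le> (u x - u y) / (x - y)"
    unfolding left_deriv_concave_on[OF u x]
    using bdd_below_concave_on_left_slopes[OF u \<open>x < b\<close>] less y by (auto intro: cInf_lower)
  with less show ?thesis by (simp add: le_divide_eq algebra_simps)
next
  case greater
  have "(u y - u x) / (y - x) \<le> left_deriv u x"
    unfolding left_deriv_concave_on[OF u x]
    using concave_on_right_slope_le_left_slope[OF u] greater x y by (auto intro!: cINF_greatest)
  with greater show ?thesis by (simp add: divide_le_eq algebra_simps)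
qed simp

lemma set_borel_measurable_mult:
  fixes f g :: "'a \<Rightarrow> real"
  assumes "set_borel_measurable M A f" "set_borel_measurable M A g"
  shows "set_borel_measurable M A (\<lambda>x. f x * g x)"
proof -
  have "(\<lambda>x. indicator A x *\<^sub>R (f x * g x)) = (\<lambda>x. (indicator A x *\<^sub>R f x) * (indicator A x *\<^sub>R g x))"
    by (auto simp: indicator_def fun_eq_iff)
  with assms show ?thesis
    unfolding set_borel_measurable_def by (simp add: borel_measurable_times)
qed

lemma set_integrable_bounded_mult:
  fixes f g :: "'a \<Rightarrow> real"
  assumes f: "set_integrable M A f" and g: "set_borel_measurable M A g"
    and bound: "\<And>x. x \<in> A \<Longrightarrow> \<bar>g x\<bar> \<le> K"
  shows "set_integrable M A (\<lambda>x. g x * f x)"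
proof (rule set_integrable_bound)
  show "set_integrable M A (\<lambda>x. K * f x)" using f by simp
  have "set_borel_measurable M A f"
    using f unfolding set_integrable_def set_borel_measurable_def by (rule borel_measurable_integrable)
  with g show "set_borel_measurable M A (\<lambda>x. g x * f x)" by (rule set_borel_measurable_mult)
  have "\<bar>g x\<bar> * \<bar>f x\<bar> \<le> \<bar>K\<bar> * \<bar>f x\<bar>" if "x \<in> A" for x
    using bound[OF that] by (intro mult_right_mono) auto
  then show "AE x in M. x \<in> A \<longrightarrow> norm (g x * f x) \<le> norm (K * f x)"
    by (simp add: abs_mult)
qed

lemma allocation_values:
  assumes "is_allocation \<nu>" and "s \<in> {0..1}"
  shows "\<nu> s m = 0 \<or> \<nu> s m = 1"
  using assms by (auto simp: is_allocation_def)

lemma set_integrable_allocation_mult: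
  fixes f \<nu> :: "real \<Rightarrow> 'm::finite \<Rightarrow> real"
  assumes dens: "is_density f" and \<nu>: "is_allocation \<nu>" and k: "continuous_on {0..1} k"
  shows "set_integrable lborel {0..1} (\<lambda>s. \<nu> s m * k s * f s m)"
proof -
  obtain K where K: "\<forall>s\<in>{0..1}. \<bar>k s\<bar> \<le> K"
    using compact_imp_bounded[OF compact_continuous_image[OF k compact_Icc]]
    unfolding bounded_iff by auto
  have "set_borel_measurable lborel {0..1} k"
    using set_measurable_continuous_on[OF _ k] by (simp add: set_borel_measurable_def)
  with \<nu> have "set_borel_measurable lborel {0..1} (\<lambda>s. \<nu> s m * k s)"
    unfolding is_allocation_def by (auto intro: set_borel_measurable_mult)
  moreover have "\<bar>\<nu> s m * k s\<bar> \<le> K" if "s \<in> {0..1}" for s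
    using allocation_values[OF \<nu> that, of m] K that by auto
  moreover have "set_integrable lborel {0..1} (\<lambda>s. f s m)"
    using dens by (simp add: is_density_def)
  ultimately show ?thesis by (intro set_integrable_bounded_mult)
qed

lemma xm_nonneg:
  assumes "is_density f" and "is_allocation \<nu>"
  shows "0 \<le> xm f \<nu> m"
proof -
  have "0 \<le> \<nu> s m * f s m" if "s \<in> {0..1}" for s
    using allocation_values[OF assms(2) that, of m] assms(1) that by (auto simp: is_density_def)
  then show ?thesis
    unfolding xm_def set_lebesgue_integral_def
    by (intro Bochner_Integration.integral_nonneg) (simp split: split_indicator)
qed

lemma xm_le_total:
  fixes f \<nu> :: "real \<Rightarrow> 'm::finite \<Rightarrow> real"
  assumes "is_density f" and "is_allocation \<nu>"
  shows "xm f \<nu> m \<le> (\<Sum>m\<in>UNIV. xm f \<nu> m)"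
  using xm_nonneg[OF assms] by (intro member_le_sum) auto

lemma separating_threshold:
  fixes A B :: "real set"
  assumes "\<And>a b. a \<in> A \<Longrightarrow> b \<in> B \<Longrightarrow> b \<le> a" and "bdd_below A" and "bdd_above B"
  obtains c where "\<And>a. a \<in> A \<Longrightarrow> c \<le> a" and "\<And>b. b \<in> B \<Longrightarrow> b \<le> c"
proof (cases "A = {}")
  case True
  then show ?thesis using that[of "Sup B"] assms(3) by (auto intro: cSup_upper)
next
  case False
  then show ?thesis using that[of "Inf A"] assms(1,2) by (auto intro: cInf_lower cInf_greatest)
qed

lemma implements_Astar_threshold:
  fixes f \<mu> :: "real \<Rightarrow> 'm::finite \<Rightarrow> real"
  assumes impl: "implements (Astar h hinv u) q f \<mu>" and hinv: "strict_mono hinv"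
    and h: "continuous_on {0..1} h"
  obtains c where
    "\<And>s m. s \<in> {0..1} \<Longrightarrow> \<mu> s m = 1 \<Longrightarrow> c \<le> h s + left_deriv (u m) (xm f \<mu> m)"
    "\<And>s m. s \<in> {0..1} \<Longrightarrow> \<mu> s m = 0 \<Longrightarrow> h s + left_deriv (u m) (xm f \<mu> m) \<le> c"
proof -
  define d where "d m = left_deriv (u m) (xm f \<mu> m)" for m
  define A where "A = {h s + d m | s m. s \<in> {0..1} \<and> \<mu> s m = 1}"
  define B where "B = {h s + d m | s m. s \<in> {0..1} \<and> \<mu> s m = 0}"
  obtain K where K: "\<forall>s\<in>{0..1}. \<bar>h s\<bar> \<le> K"
    using compact_imp_bounded[OF compact_continuous_image[OF h compact_Icc]]
    unfolding bounded_iff by auto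
  have separated: "b \<le> a" if a: "a \<in> A" and b: "b \<in> B" for a b
  proof -
    from a obtain s m where s: "s \<in> {0..1}" "\<mu> s m = 1" and "a = h s + d m"
      unfolding A_def by blast
    moreover from b obtain s' m' where s': "s' \<in> {0..1}" "\<mu> s' m' = 0" and "b = h s' + d m'"
      unfolding B_def by blast
    moreover have "Astar h hinv u m' (xm f \<mu> m') s' < Astar h hinv u m (xm f \<mu> m) s"
      using impl s s' unfolding implements_def by blast
    ultimately show ?thesis
      using hinv unfolding Astar_def d_def by (simp add: strict_mono_less)
  qed
  have bounded: "bdd_below A" "bdd_above B"
  proof -
    have "finite (range d)" by (rule finite_imageI) simp
    then have d: "Min (range d) \<le> d m" "d m \<le> Max (range d)" for m by auto
    have "- K + Min (range d) \<le> h s + d m" "h s + d m \<le> K + Max (range d)"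
      if "s \<in> {0..1}" for s m
      using abs_le_D1[OF bspec[OF K that]] abs_le_D2[OF bspec[OF K that]] d[of m] by linarith+
    then show "bdd_below A" "bdd_above B"
      unfolding A_def B_def
      by (auto intro!: bdd_belowI[of _ "- K + Min (range d)"] bdd_aboveI[of _ "K + Max (range d)"])
  qed
  obtain c where c: "\<And>a. a \<in> A \<Longrightarrow> c \<le> a" "\<And>b. b \<in> B \<Longrightarrow> b \<le> c"
    using separating_threshold[OF separated bounded] by blast
  show ?thesis
  proof (rule that)
    fix s m assume "s \<in> {0..1}" "\<mu> s m = 1"
    then show "c \<le> h s + left_deriv (u m) (xm f \<mu> m)"
      using c(1)[of "h s + d m"] unfolding A_def d_def by blast
  next
    fix s m assume "s \<in> {0..1}" "\<mu> s m = 0"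
    then show "h s + left_deriv (u m) (xm f \<mu> m) \<le> c"
      using c(2)[of "h s + d m"] unfolding B_def d_def by blast
  qed
qed

lemma threshold_allocation_type_integral_le:
  fixes f \<mu> \<nu> :: "real \<Rightarrow> 'm::finite \<Rightarrow> real"
  assumes dens: "is_density f" and \<mu>: "is_allocation \<mu>" and \<nu>: "is_allocation \<nu>"
    and h: "continuous_on {0..1} h"
    and above: "\<And>s. s \<in> {0..1} \<Longrightarrow> \<mu> s m = 1 \<Longrightarrow> c \<le> h s + d"
    and below: "\<And>s. s \<in> {0..1} \<Longrightarrow> \<mu> s m = 0 \<Longrightarrow> h s + d \<le> c"
  shows "(LINT s:{0..1}|lborel. \<nu> s m * h s * f s m) + (d - c) * xm f \<nu> m
       \<le> (LINT s:{0..1}|lborel. \<mu> s m * h s * f s m) + (d - c) * xm f \<mu> m"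
proof -
  have integrable: "set_integrable lborel {0..1} (\<lambda>s. \<alpha> s m * h s * f s m)"
    "set_integrable lborel {0..1} (\<lambda>s. (d - c) * (\<alpha> s m * f s m))"
    if "is_allocation \<alpha>" for \<alpha>
    using set_integrable_allocation_mult[OF dens that h, of m]
      set_integrable_allocation_mult[OF dens that continuous_on_const[of _ 1], of m] by auto
  have "(LINT s:{0..1}|lborel. \<nu> s m * h s * f s m + (d - c) * (\<nu> s m * f s m))
      \<le> (LINT s:{0..1}|lborel. \<mu> s m * h s * f s m + (d - c) * (\<mu> s m * f s m))"
  proof (rule set_integral_mono)
    fix s :: real assume s: "s \<in> {0..1}"
    have "0 \<le> f s m" using dens s by (simp add: is_density_def)
    then have "\<mu> s m = 1 \<Longrightarrow> 0 \<le> (h s + d - c) * f s m" "\<mu> s m = 0 \<Longrightarrow> (h s + d - c) * f s m \<le> 0"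
      using above[OF s] below[OF s] by (simp_all add: mult_nonpos_nonneg)
    then show "\<nu> s m * h s * f s m + (d - c) * (\<nu> s m * f s m)
        \<le> \<mu> s m * h s * f s m + (d - c) * (\<mu> s m * f s m)"
      using allocation_values[OF \<nu> s, of m] allocation_values[OF \<mu> s, of m]
      by (auto simp: algebra_simps)
  qed (use integrable \<mu> \<nu> in auto)
  then show ?thesis
    using integrable[OF \<mu>] integrable[OF \<nu>] by (simp add: xm_def)
qed

lemma threshold_allocation_maximizes_linearization:
  fixes f \<mu> \<nu> :: "real \<Rightarrow> 'm::finite \<Rightarrow> real"
  assumes dens: "is_density f" and \<mu>: "is_allocation \<mu>" and \<nu>: "is_allocation \<nu>"
    and h: "continuous_on {0..1} h"
    and above: "\<And>s m. s \<in> {0..1} \<Longrightarrow> \<mu> s m = 1 \<Longrightarrow> c \<le> h s + d m"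
    and below: "\<And>s m. s \<in> {0..1} \<Longrightarrow> \<mu> s m = 0 \<Longrightarrow> h s + d m \<le> c"
    and same_total: "(\<Sum>m\<in>UNIV. xm f \<nu> m) = (\<Sum>m\<in>UNIV. xm f \<mu> m)"
  shows "sbar h f \<nu> + (\<Sum>m\<in>UNIV. d m * xm f \<nu> m) \<le> sbar h f \<mu> + (\<Sum>m\<in>UNIV. d m * xm f \<mu> m)"
proof -
  have "sbar h f \<nu> + (\<Sum>m\<in>UNIV. (d m - c) * xm f \<nu> m) \<le> sbar h f \<mu> + (\<Sum>m\<in>UNIV. (d m - c) * xm f \<mu> m)"
    unfolding sbar_def sum.distrib[symmetric]
    by (intro sum_mono threshold_allocation_type_integral_le[OF dens \<mu> \<nu> h above below])
  moreover have "(\<Sum>m\<in>UNIV. (d m - c) * xm f \<alpha> m) = (\<Sum>m\<in>UNIV. d m * xm f \<alpha> m) - c * (\<Sum>m\<in>UNIV. xm f \<alpha> m)"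
    for \<alpha> by (simp add: left_diff_distrib sum_subtractf sum_distrib_left)
  ultimately show ?thesis using same_total by simp
qed

theorem proposition10:
  fixes q :: real
    and h hinv g :: "real \<Rightarrow> real"
    and u :: "'m::finite \<Rightarrow> real \<Rightarrow> real"
    and f \<mu> :: "real \<Rightarrow> 'm \<Rightarrow> real"
  assumes q: "0 < q" "q < 1"
    and h_cont: "continuous_on {0..1} h"
    and h_mono: "strict_mono_on {0..1} h"
    and h_nonneg: "\<forall>s\<in>{0..1}. 0 \<le> h s"
    and hinv_mono: "strict_mono hinv"
    and hinv_inv: "\<forall>s\<in>{0..1}. hinv (h s) = s"
    and g_cont: "continuous_on UNIV g"
    and g_mono: "strict_mono g"
    and u_conc: "\<forall>m. \<exists>a b. a < 0 \<and> q < b \<and> concave_on {a<..<b} (u m)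
                    \<and> finite {y\<in>{a<..<b}. \<not> (u m differentiable (at y))}"
    and dens: "is_density f"
    and full: "\<forall>\<nu>. feasible q f \<nu> \<longrightarrow>
                 (\<exists>\<nu>'. feasible q f \<nu>' \<and> (\<Sum>m\<in>UNIV. xm f \<nu>' m) = q
                        \<and> xi g h u f \<nu> \<le> xi g h u f \<nu>')"
    and alloc: "is_allocation \<mu>"
    and impl: "implements (Astar h hinv u) q f \<mu>"
  shows "optimal q g h u f \<mu>"
proof -
  define d where "d m = left_deriv (u m) (xm f \<mu> m)" for m
  have total: "(\<Sum>m\<in>UNIV. xm f \<mu> m) = q" using impl by (simp add: implements_def)
  obtain c where above: "\<And>s m. s \<in> {0..1} \<Longrightarrow> \<mu> s m = 1 \<Longrightarrow> c \<le> h s + d m"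
    and below: "\<And>s m. s \<in> {0..1} \<Longrightarrow> \<mu> s m = 0 \<Longrightarrow> h s + d m \<le> c"
    using implements_Astar_threshold[OF impl hinv_mono h_cont] unfolding d_def by blast
  have tangent: "u m y \<le> u m (xm f \<mu> m) + d m * (y - xm f \<mu> m)" if "0 \<le> y" "y \<le> q" for m y
  proof -
    obtain a b where "a < 0" "q < b" "concave_on {a<..<b} (u m)" using u_conc by blast
    then show ?thesis unfolding d_def
      using that xm_nonneg[OF dens alloc, of m] xm_le_total[OF dens alloc, of m]
      by (intro concave_on_le_left_deriv_tangent) (auto simp: total)
  qed
  have "xi g h u f \<nu> \<le> xi g h u f \<mu>" if "feasible q f \<nu>" "(\<Sum>m\<in>UNIV. xm f \<nu> m) = q" for \<nu>
  proof -
    have \<nu>: "is_allocation \<nu>" using that(1) by (simp add: feasible_def)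
    have "(\<Sum>m\<in>UNIV. u m (xm f \<nu> m)) \<le> (\<Sum>m\<in>UNIV. u m (xm f \<mu> m) + d m * (xm f \<nu> m - xm f \<mu> m))"
      using xm_nonneg[OF dens \<nu>] xm_le_total[OF dens \<nu>] that(2) by (intro sum_mono tangent) auto
    moreover have "sbar h f \<nu> + (\<Sum>m\<in>UNIV. d m * xm f \<nu> m) \<le> sbar h f \<mu> + (\<Sum>m\<in>UNIV. d m * xm f \<mu> m)"
      using threshold_allocation_maximizes_linearization[OF dens alloc \<nu> h_cont above below] that(2) total
      by simp
    ultimately show ?thesis unfolding xi_def
      by (intro strict_mono_leD[OF g_mono]) (simp add: sum.distrib sum_subtractf right_diff_distrib)
  qed
  moreover have "feasible q f \<mu>" using alloc total by (simp add: feasible_def)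
  ultimately show ?thesis using full unfolding optimal_def by (meson order_trans)
qed

end
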